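(* Let $X$ be a real Hilbert space, $f,g\in\Gamma_0(X)$, $T:=\operatorname{Id}-\operatorname{P}_f+\operatorname{P}_g\operatorname{R}_f$, $v:=P_{\overline{\operatorname{ran}}(\operatorname{Id}-T)}(0)$, $D:=\operatorname{dom}\partial f-\operatorname{dom}\partial g$, $R:=\operatorname{ran}\partial f+\operatorname{ran}\partial g$. Assume $\overline{\operatorname{ran}}(\operatorname{Id}-T)=\overline{D\cap R}=\overline D\cap\overline R$ and $P_{\overline R}(0)=0$. Let $Z:=\{x\in X: 0\in -v+\partial f(x)+\partial g(x-v)\}$. Then (i) $Z=\{x\in X: 0\in\partial f(x)+\partial g(x-v)\}$; (ii) if $Z\neq\varnothing$, then $Z=\operatorname{argmin}_{x\in X}\big(-\langle x,v\rangle+f(x)+g(x-v)\big)=\operatorname{argmin}_{x\in X}\big(f(x)+g(x-v)\big)$.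
   Context: $\Gamma_0(X)$ is the set of convex, lower semicontinuous, proper functions on $X$. $\operatorname{P}_h:=(\operatorname{Id}+\partial h)^{-1}$ is the proximal mapping and $\operatorname{R}_h:=2\operatorname{P}_h-\operatorname{Id}$. $P_S$ is the projection onto a nonempty closed convex set $S$. *)

theory Defs
  imports "HOL-Analysis.Analysis" "HOL-Library.Extended_Real"
begin

text \<open>Real Hilbert space: type class {real_inner, complete_space}.
  Functions X -> ]-inf,+inf] are modelled as 'a => ereal.\<close>

definition epigraph :: "('a \<Rightarrow> ereal) \<Rightarrow> ('a \<times> real) set" where
  "epigraph f = {(x, t). f x \<le> ereal t}"

definition Gamma0 :: "('a::real_normed_vector \<Rightarrow> ereal) \<Rightarrow> bool" where
  "Gamma0 f \<longleftrightarrow> convex (epigraph f) \<and> closed (epigraph f)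
     \<and> (\<forall>x. f x \<noteq> -\<infinity>) \<and> (\<exists>x. f x \<noteq> \<infinity>)"

definition subdiff :: "('a::real_inner \<Rightarrow> ereal) \<Rightarrow> 'a \<Rightarrow> 'a set" where
  "subdiff f x = {u. f x \<noteq> \<infinity> \<and> (\<forall>y. f x + ereal (inner u (y - x)) \<le> f y)}"

definition dom_subdiff :: "('a::real_inner \<Rightarrow> ereal) \<Rightarrow> 'a set" where
  "dom_subdiff f = {x. subdiff f x \<noteq> {}}"

definition ran_subdiff :: "('a::real_inner \<Rightarrow> ereal) \<Rightarrow> 'a set" where
  "ran_subdiff f = (\<Union>x. subdiff f x)"

text \<open>Proximal mapping P_f = (Id + subdiff f)^{-1} (single-valued for f in Gamma0).\<close>
definition prox :: "('a::real_inner \<Rightarrow> ereal) \<Rightarrow> 'a \<Rightarrow> 'a" where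
  "prox f x = (THE p. x - p \<in> subdiff f p)"

definition refl_prox :: "('a::real_inner \<Rightarrow> ereal) \<Rightarrow> 'a \<Rightarrow> 'a" where
  "refl_prox f x = 2 *\<^sub>R prox f x - x"

definition proj :: "'a::real_inner set \<Rightarrow> 'a \<Rightarrow> 'a" where
  "proj S a = (THE y. y \<in> S \<and> (\<forall>z\<in>S. dist a y \<le> dist a z))"

definition argmin :: "('a \<Rightarrow> ereal) \<Rightarrow> 'a set" where
  "argmin h = {x. \<forall>y. h x \<le> h y}"

end

theory Submission
  imports Defs
begin

(* By density of dom (subdiff f) in dom f and of ran (subdiff f) in dom f^* (both obtained from
   proximal points of tilted copies of f), closure D is the closure of dom f - dom g and
   closure R is the closure of dom f^* + dom g^*; in particular both are convex.  The projection w
   of 0 onto closure D satisfies <y - z - w, w> >= 0 for y in dom f and z in dom g.  Hence <w, .>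
   is bounded above on dom g, so w + dom g^* is contained in dom g^*, and w lies in closure R
   because 0 does.  Thus w is also the projection of 0 onto closure D Int closure R, i.e. w = v.
   This normality inequality lets v be moved between a subgradient of f at x and one of g at
   x - v, which gives (i).  For (ii): once c is in subdiff f x0 + subdiff g (x0 - v) for some x0,
   the minimisers of f + g (. - v) - <., c> are exactly the solutions of that inclusion. *)

section \<open>Proper convex lower semicontinuous functions\<close>

definition effdom :: "('a \<Rightarrow> ereal) \<Rightarrow> 'a set" where
  "effdom f = {x. f x \<noteq> \<infinity>}"

(* The domain of the Fenchel conjugate f^*: the slopes of the affine minorants of f. *)
definition dom_conj :: "('a::real_inner \<Rightarrow> ereal) \<Rightarrow> 'a set" where
  "dom_conj f = {u. \<exists>C. \<forall>x. ereal (inner u x - C) \<le> f x}"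

lemma Gamma0_le_ereal_iff:
  assumes "Gamma0 f" and "x \<in> effdom f"
  shows "f x \<le> ereal r \<longleftrightarrow> real_of_ereal (f x) \<le> r"
  using assms unfolding Gamma0_def effdom_def by (cases "f x") auto

lemma Gamma0_ereal_le_iff:
  assumes "Gamma0 f" and "x \<in> effdom f"
  shows "ereal r \<le> f x \<longleftrightarrow> r \<le> real_of_ereal (f x)"
  using assms unfolding Gamma0_def effdom_def by (cases "f x") auto

lemma Gamma0_add_le_iff:
  assumes "Gamma0 f" and "x \<in> effdom f" and "y \<in> effdom f"
  shows "f x + ereal s \<le> f y \<longleftrightarrow> real_of_ereal (f x) + s \<le> real_of_ereal (f y)"
  using assms unfolding Gamma0_def effdom_def by (cases "f x"; cases "f y") auto

lemma Gamma0_effdom_nonempty: "Gamma0 f \<Longrightarrow> effdom f \<noteq> {}"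
  unfolding Gamma0_def effdom_def by auto

lemma Gamma0_convex_combination_le:
  assumes f: "Gamma0 f" and x: "x \<in> effdom f" and y: "y \<in> effdom f" and t: "0 \<le> t" "t \<le> 1"
  shows "f ((1 - t) *\<^sub>R x + t *\<^sub>R y) \<le> ereal ((1 - t) * real_of_ereal (f x) + t * real_of_ereal (f y))"
proof -
  have "(x, real_of_ereal (f x)) \<in> epigraph f" "(y, real_of_ereal (f y)) \<in> epigraph f"
    using x y by (simp_all add: epigraph_def Gamma0_le_ereal_iff[OF f])
  with f t have "(1 - t) *\<^sub>R (x, real_of_ereal (f x)) + t *\<^sub>R (y, real_of_ereal (f y)) \<in> epigraph f"
    unfolding Gamma0_def by (intro convexD) auto
  then show ?thesis unfolding epigraph_def by simp
qed

lemma Gamma0_convex_effdom: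
  assumes f: "Gamma0 f"
  shows "convex (effdom f)"
  unfolding convex_alt
proof (intro ballI allI impI)
  fix x y and t :: real
  assume "x \<in> effdom f" "y \<in> effdom f" "0 \<le> t \<and> t \<le> 1"
  with Gamma0_convex_combination_le[OF f] show "(1 - t) *\<^sub>R x + t *\<^sub>R y \<in> effdom f"
    by (force simp: effdom_def)
qed

lemma Gamma0_convex_on:
  assumes f: "Gamma0 f"
  shows "convex_on (effdom f) (\<lambda>x. real_of_ereal (f x))"
proof (rule convex_onI[OF _ Gamma0_convex_effdom[OF f]])
  fix t :: real and x y
  assume "0 < t" "t < 1" and x: "x \<in> effdom f" and y: "y \<in> effdom f"
  then have le: "f ((1 - t) *\<^sub>R x + t *\<^sub>R y) \<le> ereal ((1 - t) * real_of_ereal (f x) + t * real_of_ereal (f y))"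
    by (intro Gamma0_convex_combination_le[OF f]) auto
  moreover have "(1 - t) *\<^sub>R x + t *\<^sub>R y \<in> effdom f"
    using le by (auto simp: effdom_def)
  ultimately show "real_of_ereal (f ((1 - t) *\<^sub>R x + t *\<^sub>R y)) \<le> (1 - t) * real_of_ereal (f x) + t * real_of_ereal (f y)"
    by (simp add: Gamma0_le_ereal_iff[OF f])
qed

lemma Gamma0_le_limit:
  assumes f: "Gamma0 f" and le: "\<And>n. f (x n) \<le> ereal (t n)"
    and x: "x \<longlonglongrightarrow> x'" and t: "t \<longlonglongrightarrow> t'"
  shows "f x' \<le> ereal t'"
proof -
  have "closed (epigraph f)" using f unfolding Gamma0_def by auto
  moreover have "(x n, t n) \<in> epigraph f" for n using le unfolding epigraph_def by auto
  moreover have "(\<lambda>n. (x n, t n)) \<longlonglongrightarrow> (x', t')" using x t by (intro tendsto_intros)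
  ultimately have "(x', t') \<in> epigraph f" by (rule closed_sequentially)
  then show ?thesis unfolding epigraph_def by auto
qed

lemma epigraph_shift:
  fixes g :: "'a::real_vector \<Rightarrow> ereal"
  shows "epigraph (\<lambda>x. g (x - v)) = (+) (v, 0) ` epigraph g"
proof (intro set_eqI iffI)
  fix p assume "p \<in> epigraph (\<lambda>x. g (x - v))"
  then have "p - (v, 0) \<in> epigraph g" by (cases p) (simp add: epigraph_def)
  then show "p \<in> (+) (v, 0) ` epigraph g" by (rule rev_image_eqI) simp
next
  fix p assume "p \<in> (+) (v, 0) ` epigraph g"
  then show "p \<in> epigraph (\<lambda>x. g (x - v))" by (auto simp: epigraph_def)
qed

lemma Gamma0_shift:
  fixes g :: "'a::real_normed_vector \<Rightarrow> ereal"
  assumes "Gamma0 g"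
  shows "Gamma0 (\<lambda>x. g (x - v))"
proof -
  have "\<exists>x. g (x - v) \<noteq> \<infinity>"
    using assms unfolding Gamma0_def by (metis add_diff_cancel)
  with assms show ?thesis
    unfolding Gamma0_def epigraph_shift by (auto intro: convex_translation closed_translation)
qed

lemma subdiff_in_effdom: "a \<in> subdiff f x \<Longrightarrow> x \<in> effdom f"
  unfolding subdiff_def effdom_def by auto

lemma dom_subdiff_subset_effdom: "dom_subdiff f \<subseteq> effdom f"
  unfolding dom_subdiff_def using subdiff_in_effdom by blast

lemma subdiff_real_le:
  assumes f: "Gamma0 f" and a: "a \<in> subdiff f x" and y: "y \<in> effdom f"
  shows "real_of_ereal (f x) + inner a (y - x) \<le> real_of_ereal (f y)"
proof -
  have "f x + ereal (inner a (y - x)) \<le> f y" using a unfolding subdiff_def by auto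
  then show ?thesis by (simp add: Gamma0_add_le_iff[OF f subdiff_in_effdom[OF a] y])
qed

lemma subdiff_realI:
  assumes f: "Gamma0 f" and x: "x \<in> effdom f"
    and le: "\<And>y. y \<in> effdom f \<Longrightarrow> real_of_ereal (f x) + inner a (y - x) \<le> real_of_ereal (f y)"
  shows "a \<in> subdiff f x"
  unfolding subdiff_def
proof (intro CollectI conjI allI)
  show "f x \<noteq> \<infinity>" using x by (simp add: effdom_def)
  fix y
  show "f x + ereal (inner a (y - x)) \<le> f y"
  proof (cases "y \<in> effdom f")
    case True
    with le show ?thesis by (simp add: Gamma0_add_le_iff[OF f x])
  qed (simp add: effdom_def)
qed

lemma subdiff_shift: "subdiff (\<lambda>x. g (x - v)) x = subdiff g (x - v)"
proof -
  have "(\<forall>y. g (x - v) + ereal (inner a (y - x)) \<le> g (y - v)) \<longleftrightarrow>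
        (\<forall>z. g (x - v) + ereal (inner a (z - (x - v))) \<le> g z)" for a
  proof
    assume H: "\<forall>y. g (x - v) + ereal (inner a (y - x)) \<le> g (y - v)"
    show "\<forall>z. g (x - v) + ereal (inner a (z - (x - v))) \<le> g z"
    proof
      fix z
      from H[rule_format, of "z + v"] show "g (x - v) + ereal (inner a (z - (x - v))) \<le> g z"
        by (simp add: algebra_simps)
    qed
  next
    assume H: "\<forall>z. g (x - v) + ereal (inner a (z - (x - v))) \<le> g z"
    show "\<forall>y. g (x - v) + ereal (inner a (y - x)) \<le> g (y - v)"
    proof
      fix y
      from H[rule_format, of "y - v"] show "g (x - v) + ereal (inner a (y - x)) \<le> g (y - v)"
        by (simp add: algebra_simps)
    qed
  qed
  then show ?thesis unfolding subdiff_def by auto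
qed

lemma subdiff_add_normal:
  assumes a: "a \<in> subdiff f x" and normal: "\<And>y. y \<in> effdom f \<Longrightarrow> inner w (y - x) \<le> 0"
  shows "a + w \<in> subdiff f x"
  unfolding subdiff_def
proof (intro CollectI conjI allI)
  show "f x \<noteq> \<infinity>" using a unfolding subdiff_def by auto
  fix y
  show "f x + ereal (inner (a + w) (y - x)) \<le> f y"
  proof (cases "y \<in> effdom f")
    case True
    have "f x + ereal (inner (a + w) (y - x)) \<le> f x + ereal (inner a (y - x))"
      using normal[OF True] by (intro add_left_mono) (simp add: inner_add_left)
    also have "\<dots> \<le> f y" using a unfolding subdiff_def by auto
    finally show ?thesis .
  qed (simp add: effdom_def)
qed

section \<open>Proximal points\<close>

(* Meaningful only on effdom f, where real_of_ereal does not discard the value of f. *)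
definition prox_objective :: "('a::real_inner \<Rightarrow> ereal) \<Rightarrow> 'a \<Rightarrow> real \<Rightarrow> 'a \<Rightarrow> 'a \<Rightarrow> real" where
  "prox_objective f u \<epsilon> y x = real_of_ereal (f x) - inner u x + \<epsilon> / 2 * (norm (x - y))\<^sup>2"

lemma norm_midpoint_diff_sq:
  fixes a b y :: "'a::real_inner"
  shows "(norm (midpoint a b - y))\<^sup>2 = ((norm (a - y))\<^sup>2 + (norm (b - y))\<^sup>2) / 2 - (norm (a - b))\<^sup>2 / 4"
  unfolding midpoint_def power2_norm_eq_inner
  by (simp add: inner_add_left inner_add_right inner_diff_left inner_diff_right inner_commute field_simps)

lemma prox_objective_midpoint:
  assumes f: "Gamma0 f" and a: "a \<in> effdom f" and b: "b \<in> effdom f"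
  shows "midpoint a b \<in> effdom f"
    and "prox_objective f u \<epsilon> y (midpoint a b) + \<epsilon> / 8 * (norm (a - b))\<^sup>2
           \<le> (prox_objective f u \<epsilon> y a + prox_objective f u \<epsilon> y b) / 2"
proof -
  have m: "midpoint a b = (1 - 1/2) *\<^sub>R a + (1/2) *\<^sub>R b"
    by (simp add: midpoint_def scaleR_add_right)
  show "midpoint a b \<in> effdom f"
    unfolding m using Gamma0_convex_effdom[OF f] a b by (intro convexD_alt) auto
  have "real_of_ereal (f (midpoint a b)) \<le> (1 - 1/2) * real_of_ereal (f a) + 1/2 * real_of_ereal (f b)"
    unfolding m using convex_onD[OF Gamma0_convex_on[OF f], of "1/2" a b] a b by simp
  moreover have "inner u (midpoint a b) = (inner u a + inner u b) / 2"
    by (simp add: midpoint_def inner_add_right)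
  ultimately show "prox_objective f u \<epsilon> y (midpoint a b) + \<epsilon> / 8 * (norm (a - b))\<^sup>2
           \<le> (prox_objective f u \<epsilon> y a + prox_objective f u \<epsilon> y b) / 2"
    unfolding prox_objective_def norm_midpoint_diff_sq by (simp add: field_simps)
qed

lemma minimizing_sequence_Cauchy:
  fixes h :: "'a::metric_space \<Rightarrow> real"
  assumes strong: "\<And>a b. a \<in> S \<Longrightarrow> b \<in> S \<Longrightarrow> c * (dist a b)\<^sup>2 \<le> (h a + h b) / 2 - m"
    and c: "c > 0" and x: "\<And>n. x n \<in> S" and lim: "(\<lambda>n. h (x n)) \<longlonglongrightarrow> m"
  shows "Cauchy x"
proof (rule metric_CauchyI)
  fix r :: real
  assume r: "r > 0"
  with c have "m < m + c * r\<^sup>2" by simp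
  from order_tendstoD(2)[OF lim this] obtain N where N: "\<And>n. n \<ge> N \<Longrightarrow> h (x n) < m + c * r\<^sup>2"
    unfolding eventually_sequentially by blast
  show "\<exists>N. \<forall>p\<ge>N. \<forall>q\<ge>N. dist (x p) (x q) < r"
  proof (intro exI allI impI)
    fix p q assume "N \<le> p" "N \<le> q"
    then have "h (x p) < m + c * r\<^sup>2" "h (x q) < m + c * r\<^sup>2" by (simp_all add: N)
    then have "(h (x p) + h (x q)) / 2 - m < c * r\<^sup>2" by (simp add: field_simps)
    with strong[OF x x, of p q] have "c * (dist (x p) (x q))\<^sup>2 < c * r\<^sup>2" by simp
    with c r show "dist (x p) (x q) < r"
      by (simp add: power2_less_imp_less)
  qed
qed

lemma minimizing_sequence_exists:
  fixes h :: "'a \<Rightarrow> real"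
  assumes "S \<noteq> {}" and bdd: "bdd_below (h ` S)"
  obtains x where "\<And>n. x n \<in> S" and "(\<lambda>n. h (x n)) \<longlonglongrightarrow> Inf (h ` S)"
proof -
  let ?m = "Inf (h ` S)"
  have "\<exists>z\<in>S. h z < ?m + inverse (real (Suc n))" for n
    using cInf_lessD[of "h ` S"] assms(1) by simp
  then obtain x where x: "\<And>n. x n \<in> S" and x_lt: "\<And>n. h (x n) < ?m + inverse (real (Suc n))"
    by metis
  have "(\<lambda>n. h (x n)) \<longlonglongrightarrow> ?m"
  proof (rule real_tendsto_sandwich)
    show "\<forall>\<^sub>F n in sequentially. ?m \<le> h (x n)" using x bdd by (simp add: cInf_lower)
    show "\<forall>\<^sub>F n in sequentially. h (x n) \<le> ?m + inverse (real (Suc n))"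
      by (rule always_eventually, rule allI, rule less_imp_le, rule x_lt)
    show "(\<lambda>n. ?m + inverse (real (Suc n))) \<longlonglongrightarrow> ?m"
      using tendsto_add[OF tendsto_const LIMSEQ_inverse_real_of_nat, of ?m] by simp
  qed simp
  with x show ?thesis by (rule that)
qed

lemma prox_objective_lower_bound:
  assumes f: "Gamma0 f" and minorant: "\<And>x. ereal (inner u x - C) \<le> f x"
    and "\<epsilon> \<ge> 0" and x: "x \<in> effdom f"
  shows "- C \<le> prox_objective f u \<epsilon> y x"
proof -
  have "inner u x - C \<le> real_of_ereal (f x)"
    using minorant[of x] by (simp add: Gamma0_ereal_le_iff[OF f x])
  moreover have "0 \<le> \<epsilon> / 2 * (norm (x - y))\<^sup>2" using \<open>\<epsilon> \<ge> 0\<close> by simp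
  ultimately show ?thesis unfolding prox_objective_def by linarith
qed

lemma prox_objective_has_minimizer:
  fixes f :: "'a::{real_inner,complete_space} \<Rightarrow> ereal"
  assumes f: "Gamma0 f" and minorant: "\<And>x. ereal (inner u x - C) \<le> f x" and \<epsilon>: "\<epsilon> > 0"
  obtains z where "z \<in> effdom f"
    and "\<And>x. x \<in> effdom f \<Longrightarrow> prox_objective f u \<epsilon> y z \<le> prox_objective f u \<epsilon> y x"
proof -
  let ?h = "prox_objective f u \<epsilon> y"
  define m where "m = Inf (?h ` effdom f)"
  have bdd: "bdd_below (?h ` effdom f)"
    by (rule bdd_belowI2[where m = "- C"], rule prox_objective_lower_bound[OF f minorant]) (use \<epsilon> in auto)
  then have m_le: "m \<le> ?h x" if "x \<in> effdom f" for x
    unfolding m_def using that by (simp add: cInf_lower)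
  obtain x where x: "\<And>n. x n \<in> effdom f" and h_lim: "(\<lambda>n. ?h (x n)) \<longlonglongrightarrow> m"
    using minimizing_sequence_exists[OF Gamma0_effdom_nonempty[OF f] bdd] unfolding m_def by blast
  have strong: "\<epsilon> / 8 * (dist a b)\<^sup>2 \<le> (?h a + ?h b) / 2 - m"
    if "a \<in> effdom f" "b \<in> effdom f" for a b
    using prox_objective_midpoint(2)[OF f that, of u \<epsilon> y] m_le[OF prox_objective_midpoint(1)[OF f that]]
    unfolding dist_norm by linarith
  have "\<epsilon> / 8 > 0" using \<epsilon> by simp
  from minimizing_sequence_Cauchy[OF strong this x h_lim] obtain z where x_lim: "x \<longlonglongrightarrow> z"
    using Cauchy_convergent_iff convergent_def by blast
  have "f (x n) \<le> ereal (?h (x n) + inner u (x n) - \<epsilon> / 2 * (norm (x n - y))\<^sup>2)" for n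
    by (simp add: Gamma0_le_ereal_iff[OF f x] prox_objective_def)
  moreover have "(\<lambda>n. ?h (x n) + inner u (x n) - \<epsilon> / 2 * (norm (x n - y))\<^sup>2)
      \<longlonglongrightarrow> m + inner u z - \<epsilon> / 2 * (norm (z - y))\<^sup>2"
    by (intro tendsto_intros h_lim x_lim)
  ultimately have fz: "f z \<le> ereal (m + inner u z - \<epsilon> / 2 * (norm (z - y))\<^sup>2)"
    by (rule Gamma0_le_limit[OF f _ x_lim])
  then have z: "z \<in> effdom f" by (auto simp: effdom_def)
  have "?h z \<le> m" using fz by (simp add: Gamma0_le_ereal_iff[OF f z] prox_objective_def)
  then show ?thesis using that[OF z] m_le by fastforce
qed

lemma prox_objective_minimizer_subdiff:
  assumes f: "Gamma0 f" and z: "z \<in> effdom f"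
    and min: "\<And>x. x \<in> effdom f \<Longrightarrow> prox_objective f u \<epsilon> y z \<le> prox_objective f u \<epsilon> y x"
  shows "u - \<epsilon> *\<^sub>R (z - y) \<in> subdiff f z"
proof (rule subdiff_realI[OF f z])
  fix x assume x: "x \<in> effdom f"
  define F where "F w = real_of_ereal (f w)" for w
  define K where "K = \<epsilon> / 2 * (norm (x - z))\<^sup>2"
  have "F z + inner (u - \<epsilon> *\<^sub>R (z - y)) (x - z) \<le> F x + t * K" if t: "0 < t" "t < 1" for t
  proof -
    let ?z = "(1 - t) *\<^sub>R z + t *\<^sub>R x"
    have "?z \<in> effdom f" using Gamma0_convex_effdom[OF f] z x t unfolding convex_alt by simp
    with min have "prox_objective f u \<epsilon> y z \<le> prox_objective f u \<epsilon> y ?z" by blast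
    moreover have "F ?z \<le> (1 - t) * F z + t * F x"
      unfolding F_def using convex_onD[OF Gamma0_convex_on[OF f]] z x t by simp
    moreover have "?z - y = (z - y) + t *\<^sub>R (x - z)" and "inner u ?z = inner u z + t * inner u (x - z)"
      by (simp_all add: algebra_simps inner_add_right inner_diff_right)
    ultimately have "t * (F z + inner (u - \<epsilon> *\<^sub>R (z - y)) (x - z)) \<le> t * (F x + t * K)"
      unfolding prox_objective_def F_def K_def power2_norm_eq_inner
      by (simp add: inner_add_left inner_add_right inner_diff_left inner_diff_right inner_commute
          algebra_simps power2_eq_square)
    with t show ?thesis by simp
  qed
  then have "\<forall>\<^sub>F t in at_right 0. F z + inner (u - \<epsilon> *\<^sub>R (z - y)) (x - z) \<le> F x + t * K"
    unfolding eventually_at_right_field by (intro exI[of _ 1]) auto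
  moreover have "((\<lambda>t. F x + t * K) \<longlongrightarrow> F x + 0 * K) (at_right 0)"
    by (intro tendsto_intros)
  ultimately show "F z + inner (u - \<epsilon> *\<^sub>R (z - y)) (x - z) \<le> F x"
    using tendsto_lowerbound by fastforce
qed

(* For large eps the bound forces z towards y, for small eps it forces eps z towards 0: these give
   the density of dom (subdiff f) in dom f and of ran (subdiff f) in dom f^*. *)
lemma Gamma0_prox_point:
  fixes f :: "'a::{real_inner,complete_space} \<Rightarrow> ereal"
  assumes f: "Gamma0 f" and minorant: "\<And>x. ereal (inner u x - C) \<le> f x" and \<epsilon>: "\<epsilon> > 0"
  obtains z where "u - \<epsilon> *\<^sub>R (z - y) \<in> subdiff f z"
    and "\<And>w. w \<in> effdom f \<Longrightarrow>
           \<epsilon> * (norm (z - y))\<^sup>2 \<le> 2 * (real_of_ereal (f w) - inner u w + C) + \<epsilon> * (norm (w - y))\<^sup>2"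
proof -
  obtain z where z: "z \<in> effdom f"
    and min: "\<And>x. x \<in> effdom f \<Longrightarrow> prox_objective f u \<epsilon> y z \<le> prox_objective f u \<epsilon> y x"
    using prox_objective_has_minimizer[OF f minorant \<epsilon>] by blast
  show ?thesis
  proof (rule that)
    show "u - \<epsilon> *\<^sub>R (z - y) \<in> subdiff f z" by (rule prox_objective_minimizer_subdiff[OF f z min])
  next
    fix w assume w: "w \<in> effdom f"
    have "inner u z - C \<le> real_of_ereal (f z)"
      using minorant[of z] by (simp add: Gamma0_ereal_le_iff[OF f z])
    with min[OF w] have "\<epsilon> / 2 * (norm (z - y))\<^sup>2 \<le> real_of_ereal (f w) - inner u w + C + \<epsilon> / 2 * (norm (w - y))\<^sup>2"
      unfolding prox_objective_def by linarith
    then show "\<epsilon> * (norm (z - y))\<^sup>2 \<le> 2 * (real_of_ereal (f w) - inner u w + C) + \<epsilon> * (norm (w - y))\<^sup>2"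
      by (simp add: field_simps)
  qed
qed

section \<open>Projection onto closed convex sets\<close>

lemma proj_eqI:
  fixes C :: "'a::real_inner set"
  assumes p: "p \<in> C" and normal: "\<And>x. x \<in> C \<Longrightarrow> inner (a - p) (x - p) \<le> 0"
  shows "proj C a = p"
proof -
  have dist_sq: "(dist a x)\<^sup>2 = (dist a p)\<^sup>2 - 2 * inner (a - p) (x - p) + (norm (x - p))\<^sup>2" for x
    unfolding dist_norm power2_norm_eq_inner
    by (simp add: inner_diff_left inner_diff_right inner_commute algebra_simps)
  have p_min: "dist a p \<le> dist a x" if "x \<in> C" for x
  proof -
    have "(dist a p)\<^sup>2 \<le> (dist a x)\<^sup>2"
      using dist_sq[of x] normal[OF that] zero_le_power2[of "norm (x - p)"] by linarith
    then show ?thesis by (rule power2_le_imp_le) simp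
  qed
  show ?thesis unfolding proj_def
  proof (rule the_equality)
    show "p \<in> C \<and> (\<forall>x\<in>C. dist a p \<le> dist a x)" using p p_min by blast
  next
    fix q assume q: "q \<in> C \<and> (\<forall>x\<in>C. dist a q \<le> dist a x)"
    then have "dist a q \<le> dist a p" using p by blast
    then have "(dist a q)\<^sup>2 \<le> (dist a p)\<^sup>2" by (rule power_mono) simp
    with dist_sq[of q] normal[of q] q have "(norm (q - p))\<^sup>2 \<le> 0" by linarith
    then show "q = p" by simp
  qed
qed

lemma proj_eq_iff:
  fixes C :: "'a::{real_inner,complete_space} set"
  assumes "closed C" "convex C" "C \<noteq> {}"
  shows "proj C a = p \<longleftrightarrow> p \<in> C \<and> (\<forall>x\<in>C. inner (a - p) (x - p) \<le> 0)"
proof -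
  \<comment> \<open>Existence: the proximal point at \<open>a\<close> of the indicator function of \<open>C\<close> is a projection.\<close>
  define \<iota> where "\<iota> x = (if x \<in> C then 0 else \<infinity> :: ereal)" for x
  have "epigraph \<iota> = C \<times> {0..}" unfolding epigraph_def \<iota>_def by (auto split: if_splits)
  then have \<iota>: "Gamma0 \<iota>"
    using assms unfolding Gamma0_def by (auto simp: \<iota>_def intro: convex_Times closed_Times)
  obtain z where "0 - 1 *\<^sub>R (z - a) \<in> subdiff \<iota> z"
    by (rule Gamma0_prox_point[OF \<iota>, of 0 0 1 a]) (auto simp: \<iota>_def)
  then have z: "z \<in> C" and z_normal: "\<forall>x\<in>C. inner (a - z) (x - z) \<le> 0"
    unfolding subdiff_def \<iota>_def by (auto split: if_splits)
  then have "proj C a = z" by (intro proj_eqI) auto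
  with z z_normal proj_eqI[of p C a] show ?thesis by blast
qed

section \<open>Density of the domain and range of the subdifferential\<close>

lemma LIMSEQ_norm_sq_le_inverse:
  fixes x :: "nat \<Rightarrow> 'a::real_normed_vector"
  assumes "\<And>n. (norm (x n - l))\<^sup>2 \<le> K * inverse (real (Suc n))"
  shows "x \<longlonglongrightarrow> l"
proof (rule LIM_zero_cancel, rule Lim_null_comparison)
  show "\<forall>\<^sub>F n in sequentially. norm (x n - l) \<le> sqrt (K * inverse (real (Suc n)))"
    by (rule always_eventually, rule allI, rule real_le_rsqrt, rule assms)
  show "(\<lambda>n. sqrt (K * inverse (real (Suc n)))) \<longlonglongrightarrow> 0"
    using tendsto_real_sqrt[OF tendsto_mult[OF tendsto_const LIMSEQ_inverse_real_of_nat, of K]] by simp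
qed

lemma ran_subdiff_subset_dom_conj:
  assumes f: "Gamma0 f"
  shows "ran_subdiff f \<subseteq> dom_conj f"
proof
  fix a assume "a \<in> ran_subdiff f"
  then obtain x0 where a: "a \<in> subdiff f x0" unfolding ran_subdiff_def by blast
  have "ereal (inner a x - (inner a x0 - real_of_ereal (f x0))) \<le> f x" for x
  proof (cases "x \<in> effdom f")
    case True
    with subdiff_real_le[OF f a True] show ?thesis
      by (simp add: Gamma0_ereal_le_iff[OF f True] inner_diff_right)
  qed (simp add: effdom_def)
  then show "a \<in> dom_conj f" unfolding dom_conj_def by blast
qed

lemma effdom_subset_closure_dom_subdiff:
  fixes f :: "'a::{real_inner,complete_space} \<Rightarrow> ereal"
  assumes f: "Gamma0 f" and "dom_conj f \<noteq> {}"
  shows "effdom f \<subseteq> closure (dom_subdiff f)"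
proof
  fix y assume y: "y \<in> effdom f"
  obtain u C where minorant: "\<And>x. ereal (inner u x - C) \<le> f x"
    using assms(2) unfolding dom_conj_def by blast
  define K where "K = 2 * (real_of_ereal (f y) - inner u y + C)"
  have "\<exists>z. z \<in> dom_subdiff f \<and> (norm (z - y))\<^sup>2 \<le> K * inverse (real (Suc n))" for n
  proof -
    have \<epsilon>: "real (Suc n) > 0" by simp
    obtain z where z: "u - real (Suc n) *\<^sub>R (z - y) \<in> subdiff f z"
      and bound: "\<And>w. w \<in> effdom f \<Longrightarrow> real (Suc n) * (norm (z - y))\<^sup>2
                    \<le> 2 * (real_of_ereal (f w) - inner u w + C) + real (Suc n) * (norm (w - y))\<^sup>2"
      by (rule Gamma0_prox_point[OF f minorant \<epsilon>, where y = y]) (rule that)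
    have "real (Suc n) * (norm (z - y))\<^sup>2 \<le> K" using bound[OF y] unfolding K_def by simp
    then have "(norm (z - y))\<^sup>2 \<le> K * inverse (real (Suc n))" by (simp add: field_simps)
    moreover have "z \<in> dom_subdiff f" using z unfolding dom_subdiff_def by blast
    ultimately show ?thesis by blast
  qed
  then obtain z where "\<And>n. z n \<in> dom_subdiff f" and "\<And>n. (norm (z n - y))\<^sup>2 \<le> K * inverse (real (Suc n))"
    by metis
  with LIMSEQ_norm_sq_le_inverse show "y \<in> closure (dom_subdiff f)"
    unfolding closure_sequential by blast
qed

lemma dom_conj_subset_closure_ran_subdiff:
  fixes f :: "'a::{real_inner,complete_space} \<Rightarrow> ereal"
  assumes f: "Gamma0 f"
  shows "dom_conj f \<subseteq> closure (ran_subdiff f)"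
proof
  fix u assume "u \<in> dom_conj f"
  then obtain C where minorant: "\<And>x. ereal (inner u x - C) \<le> f x"
    unfolding dom_conj_def by blast
  obtain y where y: "y \<in> effdom f" using Gamma0_effdom_nonempty[OF f] by blast
  define K where "K = 2 * (real_of_ereal (f y) - inner u y + C) + (norm y)\<^sup>2"
  have "\<exists>a. a \<in> ran_subdiff f \<and> (norm (a - u))\<^sup>2 \<le> K * inverse (real (Suc n))" for n
  proof -
    define \<epsilon> where "\<epsilon> = inverse (real (Suc n))"
    have \<epsilon>: "0 < \<epsilon>" "\<epsilon> \<le> 1" unfolding \<epsilon>_def by (auto simp: field_simps)
    obtain z where z: "u - \<epsilon> *\<^sub>R (z - 0) \<in> subdiff f z"
      and bound: "\<And>w. w \<in> effdom f \<Longrightarrow> \<epsilon> * (norm (z - 0))\<^sup>2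
                    \<le> 2 * (real_of_ereal (f w) - inner u w + C) + \<epsilon> * (norm (w - 0))\<^sup>2"
      by (rule Gamma0_prox_point[OF f minorant \<epsilon>(1), where y = 0]) (rule that)
    have "\<epsilon> * (norm y)\<^sup>2 \<le> (norm y)\<^sup>2" using \<epsilon> by (simp add: mult_left_le_one_le)
    with bound[OF y] have "\<epsilon> * (norm z)\<^sup>2 \<le> K" unfolding K_def by simp
    then have "\<epsilon> * (\<epsilon> * (norm z)\<^sup>2) \<le> \<epsilon> * K" using \<epsilon> by (simp add: mult_left_mono)
    then have "(norm ((u - \<epsilon> *\<^sub>R z) - u))\<^sup>2 \<le> K * \<epsilon>"
      using \<epsilon> by (simp add: power_mult_distrib power2_eq_square algebra_simps)
    moreover have "u - \<epsilon> *\<^sub>R z \<in> ran_subdiff f" using z unfolding ran_subdiff_def by auto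
    ultimately show ?thesis unfolding \<epsilon>_def by blast
  qed
  then obtain a where "\<And>n. a n \<in> ran_subdiff f" and "\<And>n. (norm (a n - u))\<^sup>2 \<le> K * inverse (real (Suc n))"
    by metis
  with LIMSEQ_norm_sq_le_inverse show "u \<in> closure (ran_subdiff f)"
    unfolding closure_sequential by blast
qed

lemma convex_dom_conj: "convex (dom_conj f)"
proof (rule convexI)
  fix a b and s t :: real
  assume "a \<in> dom_conj f" "b \<in> dom_conj f" and st: "0 \<le> s" "0 \<le> t" "s + t = 1"
  then obtain Ca Cb where Ca: "\<And>x. ereal (inner a x - Ca) \<le> f x" and Cb: "\<And>x. ereal (inner b x - Cb) \<le> f x"
    unfolding dom_conj_def by blast
  have "ereal (inner (s *\<^sub>R a + t *\<^sub>R b) x - (s * Ca + t * Cb)) \<le> f x" for x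
  proof (cases "f x")
    case (real r)
    then have "inner a x - Ca \<le> r" "inner b x - Cb \<le> r" using Ca[of x] Cb[of x] by auto
    then have "s * (inner a x - Ca) + t * (inner b x - Cb) \<le> s * r + t * r"
      using st by (intro add_mono mult_left_mono) auto
    also have "\<dots> = r" using st(3) by (simp flip: distrib_right)
    finally show ?thesis using real by (simp add: inner_add_left algebra_simps)
  next
    case MInf
    then show ?thesis using Ca[of x] by simp
  qed simp
  then show "s *\<^sub>R a + t *\<^sub>R b \<in> dom_conj f" unfolding dom_conj_def by blast
qed

lemma dom_conj_add_bounded:
  assumes b: "b \<in> dom_conj g" and bound: "\<And>z. z \<in> effdom g \<Longrightarrow> inner w z \<le> c"
  shows "b + w \<in> dom_conj g"
proof -
  obtain C where C: "\<And>x. ereal (inner b x - C) \<le> g x" using b unfolding dom_conj_def by blast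
  have "ereal (inner (b + w) x - (C + c)) \<le> g x" for x
  proof (cases "x \<in> effdom g")
    case True
    then have "ereal (inner (b + w) x - (C + c)) \<le> ereal (inner b x - C)"
      using bound[OF True] by (simp add: inner_add_left)
    also have "\<dots> \<le> g x" by (rule C)
    finally show ?thesis .
  qed (simp add: effdom_def)
  then show ?thesis unfolding dom_conj_def by blast
qed

lemma closure_image2_eq:
  fixes op :: "'a::topological_space \<Rightarrow> 'b::topological_space \<Rightarrow> 'c::topological_space"
  assumes op: "continuous_on UNIV (\<lambda>p. op (fst p) (snd p))"
    and A: "A \<subseteq> A'" "A' \<subseteq> closure A" and B: "B \<subseteq> B'" "B' \<subseteq> closure B"
  shows "closure {op a b | a b. a \<in> A' \<and> b \<in> B'} = closure {op a b | a b. a \<in> A \<and> b \<in> B}"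
proof (rule subset_antisym)
  let ?op = "\<lambda>p. op (fst p) (snd p)"
  have "{op a b | a b. a \<in> A' \<and> b \<in> B'} \<subseteq> ?op ` closure (A \<times> B)"
  proof (rule subsetI, elim CollectE exE conjE)
    fix x a b assume x: "x = op a b" and "a \<in> A'" "b \<in> B'"
    with A B have "(a, b) \<in> closure (A \<times> B)" by (auto simp: closure_Times)
    then show "x \<in> ?op ` closure (A \<times> B)" by (rule rev_image_eqI) (simp add: x)
  qed
  also have "\<dots> \<subseteq> closure (?op ` (A \<times> B))"
    by (rule image_closure_subset[OF continuous_on_subset[OF op] closed_closure closure_subset]) simp
  also have "?op ` (A \<times> B) = {op a b | a b. a \<in> A \<and> b \<in> B}" by force
  finally show "closure {op a b | a b. a \<in> A' \<and> b \<in> B'} \<subseteq> closure {op a b | a b. a \<in> A \<and> b \<in> B}"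
    by (rule closure_minimal) simp
  show "closure {op a b | a b. a \<in> A \<and> b \<in> B} \<subseteq> closure {op a b | a b. a \<in> A' \<and> b \<in> B'}"
    using A(1) B(1) by (intro closure_mono) blast
qed

lemma closure_dom_subdiff_diff:
  fixes f g :: "'a::{real_inner,complete_space} \<Rightarrow> ereal"
  assumes f: "Gamma0 f" and g: "Gamma0 g" and "dom_conj f \<noteq> {}" "dom_conj g \<noteq> {}"
  shows "closure {a - b | a b. a \<in> dom_subdiff f \<and> b \<in> dom_subdiff g}
       = closure {a - b | a b. a \<in> effdom f \<and> b \<in> effdom g}"
proof (rule closure_image2_eq[symmetric])
  show "continuous_on UNIV (\<lambda>p::'a \<times> 'a. fst p - snd p)" by (intro continuous_intros)
qed (simp_all add: dom_subdiff_subset_effdom effdom_subset_closure_dom_subdiff assms)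

lemma closure_ran_subdiff_sum:
  fixes f g :: "'a::{real_inner,complete_space} \<Rightarrow> ereal"
  assumes f: "Gamma0 f" and g: "Gamma0 g"
  shows "closure {a + b | a b. a \<in> ran_subdiff f \<and> b \<in> ran_subdiff g}
       = closure {a + b | a b. a \<in> dom_conj f \<and> b \<in> dom_conj g}"
proof (rule closure_image2_eq[symmetric])
  show "continuous_on UNIV (\<lambda>p::'a \<times> 'a. fst p + snd p)" by (intro continuous_intros)
qed (simp_all add: ran_subdiff_subset_dom_conj dom_conj_subset_closure_ran_subdiff assms)

lemma convex_closure_effdom_diff:
  assumes "Gamma0 f" and "Gamma0 g"
  shows "convex (closure {a - b | a b. a \<in> effdom f \<and> b \<in> effdom g})"
proof -
  have "{a - b | a b. a \<in> effdom f \<and> b \<in> effdom g} = (\<Union>a\<in>effdom f. \<Union>b\<in>effdom g. {a - b})" by auto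
  with convex_differences[OF Gamma0_convex_effdom Gamma0_convex_effdom, OF assms] show ?thesis
    by (simp add: convex_closure)
qed

lemma convex_closure_dom_conj_sum: "convex (closure {a + b | a b. a \<in> dom_conj f \<and> b \<in> dom_conj g})"
proof -
  have "{a + b | a b. a \<in> dom_conj f \<and> b \<in> dom_conj g} = (\<Union>a\<in>dom_conj f. \<Union>b\<in>dom_conj g. {a + b})" by auto
  with convex_sums[OF convex_dom_conj[of f] convex_dom_conj[of g]] show ?thesis
    by (simp add: convex_closure)
qed

lemma translate_mem_closure_dom_conj_sum:
  assumes zero: "0 \<in> closure {a + b | a b. a \<in> dom_conj f \<and> b \<in> dom_conj g}"
    and bound: "\<And>z. z \<in> effdom g \<Longrightarrow> inner w z \<le> c"
  shows "w \<in> closure {a + b | a b. a \<in> dom_conj f \<and> b \<in> dom_conj g}"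
proof -
  let ?S = "{a + b | a b. a \<in> dom_conj f \<and> b \<in> dom_conj g}"
  have "(+) w ` ?S \<subseteq> ?S"
  proof (rule image_subsetI, elim CollectE exE conjE)
    fix r a b assume "r = a + b" "a \<in> dom_conj f" "b \<in> dom_conj g"
    moreover have "b + w \<in> dom_conj g" using \<open>b \<in> dom_conj g\<close> bound by (rule dom_conj_add_bounded)
    moreover have "w + r = a + (b + w)" using \<open>r = a + b\<close> by (simp add: algebra_simps)
    ultimately show "w + r \<in> ?S" by blast
  qed
  then have "closure ((+) w ` ?S) \<subseteq> closure ?S" by (rule closure_mono)
  moreover have "w \<in> (+) w ` closure ?S" using zero by (rule rev_image_eqI) simp
  ultimately show ?thesis by (simp add: closure_translation subset_iff)
qed

section \<open>Normality of the projection v\<close>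

lemma proj_closure_inter_normal:
  fixes f g :: "'a::{real_inner,complete_space} \<Rightarrow> ereal"
  assumes f: "Gamma0 f" and g: "Gamma0 g"
    and D: "D = {a - b | a b. a \<in> dom_subdiff f \<and> b \<in> dom_subdiff g}"
    and R: "R = {a + b | a b. a \<in> ran_subdiff f \<and> b \<in> ran_subdiff g}"
    and R_ne: "R \<noteq> {}" and R_proj: "proj (closure R) 0 = 0"
    and v: "v = proj (closure D \<inter> closure R) 0"
    and y: "y \<in> effdom f" and z: "z \<in> effdom g"
  shows "0 \<le> inner (y - z - v) v"
proof -
  let ?D = "{a - b | a b. a \<in> effdom f \<and> b \<in> effdom g}"
  let ?R = "{a + b | a b. a \<in> dom_conj f \<and> b \<in> dom_conj g}"
  from R_ne obtain a1 b1 where "a1 \<in> ran_subdiff f" "b1 \<in> ran_subdiff g" unfolding R by blast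
  then obtain x0 where x0: "x0 \<in> effdom f" and conj_ne: "dom_conj f \<noteq> {}" "dom_conj g \<noteq> {}"
    using ran_subdiff_subset_dom_conj[OF f] ran_subdiff_subset_dom_conj[OF g] subdiff_in_effdom
    unfolding ran_subdiff_def by blast
  have clD: "closure D = closure ?D" unfolding D by (rule closure_dom_subdiff_diff[OF f g conj_ne])
  have clR: "closure R = closure ?R" unfolding R by (rule closure_ran_subdiff_sum[OF f g])
  have cvD: "convex (closure D)" unfolding clD by (rule convex_closure_effdom_diff[OF f g])
  have cvR: "convex (closure R)" unfolding clR by (rule convex_closure_dom_conj_sum)
  have "closure R \<noteq> {}" using R_ne closure_subset by blast
  from proj_eq_iff[OF closed_closure cvR this, of 0 0] R_proj have "0 \<in> closure R" by blast
  have diff_mem: "y' - z' \<in> closure D" if "y' \<in> effdom f" "z' \<in> effdom g" for y' z'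
  proof -
    have "y' - z' \<in> ?D" using that by auto
    then show ?thesis unfolding clD by (rule closure_subset[THEN subsetD])
  qed
  have D_ne: "closure D \<noteq> {}" using diff_mem[OF y z] by auto
  obtain w where w: "w \<in> closure D" and w_normal: "\<And>x. x \<in> closure D \<Longrightarrow> inner (0 - w) (x - w) \<le> 0"
    using proj_eq_iff[OF closed_closure cvD D_ne, of 0 "proj (closure D) 0"] by auto
  have normal: "0 \<le> inner (y' - z' - w) w" if "y' \<in> effdom f" "z' \<in> effdom g" for y' z'
    using w_normal[OF diff_mem[OF that]] by (simp add: inner_commute)
  have "inner w z \<le> inner w x0 - inner w w" if "z \<in> effdom g" for z
    using normal[OF x0 that] by (simp add: inner_diff_left inner_diff_right inner_commute)
  with \<open>0 \<in> closure R\<close> have "w \<in> closure R"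
    unfolding clR by (rule translate_mem_closure_dom_conj_sum)
  with w w_normal have "v = w" unfolding v by (intro proj_eqI) auto
  with normal[OF y z] show ?thesis by simp
qed

section \<open>Solutions of the inclusion and minimisers\<close>

definition sum_subdiff_solutions :: "('a::real_inner \<Rightarrow> ereal) \<Rightarrow> ('a \<Rightarrow> ereal) \<Rightarrow> 'a \<Rightarrow> 'a \<Rightarrow> 'a set" where
  "sum_subdiff_solutions f g v c = {x. \<exists>a b. a \<in> subdiff f x \<and> b \<in> subdiff g (x - v) \<and> a + b = c}"

lemma sum_subdiff_solutions_shift:
  assumes normal: "\<And>y z. y \<in> effdom f \<Longrightarrow> z \<in> effdom g \<Longrightarrow> 0 \<le> inner (y - z - v) v"
  shows "sum_subdiff_solutions f g v c = sum_subdiff_solutions f g v (c - v)"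
proof (intro set_eqI iffI)
  fix x assume "x \<in> sum_subdiff_solutions f g v c"
  then obtain a b where a: "a \<in> subdiff f x" and b: "b \<in> subdiff g (x - v)" and "a + b = c"
    unfolding sum_subdiff_solutions_def by blast
  have "a + - v \<in> subdiff f x"
  proof (rule subdiff_add_normal[OF a])
    fix y assume "y \<in> effdom f"
    from normal[OF this subdiff_in_effdom[OF b]] show "inner (- v) (y - x) \<le> 0"
      by (simp add: inner_diff_left inner_commute)
  qed
  moreover have "(a + - v) + b = c - v" by (subst \<open>a + b = c\<close>[symmetric]) (simp add: algebra_simps)
  ultimately show "x \<in> sum_subdiff_solutions f g v (c - v)"
    unfolding sum_subdiff_solutions_def using b by blast
next
  fix x assume "x \<in> sum_subdiff_solutions f g v (c - v)"
  then obtain a b where a: "a \<in> subdiff f x" and b: "b \<in> subdiff g (x - v)" and "a + b = c - v"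
    unfolding sum_subdiff_solutions_def by blast
  have "b + v \<in> subdiff g (x - v)"
  proof (rule subdiff_add_normal[OF b])
    fix z assume "z \<in> effdom g"
    from normal[OF subdiff_in_effdom[OF a] this] show "inner v (z - (x - v)) \<le> 0"
      by (simp add: inner_diff_left inner_diff_right inner_commute)
  qed
  moreover have "a + (b + v) = c" using \<open>a + b = c - v\<close> by (simp add: algebra_simps eq_diff_eq)
  ultimately show "x \<in> sum_subdiff_solutions f g v c"
    unfolding sum_subdiff_solutions_def using a by blast
qed

lemma Gamma0_tilted_sum_eq:
  fixes \<phi> \<psi> :: "'a::real_normed_vector \<Rightarrow> ereal"
  assumes \<phi>: "Gamma0 \<phi>" and \<psi>: "Gamma0 \<psi>"
  shows "x \<in> effdom \<phi> \<Longrightarrow> x \<in> effdom \<psi> \<Longrightarrow>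
           ereal r + \<phi> x + \<psi> x = ereal (r + real_of_ereal (\<phi> x) + real_of_ereal (\<psi> x))"
    and "x \<notin> effdom \<phi> \<or> x \<notin> effdom \<psi> \<Longrightarrow> ereal r + \<phi> x + \<psi> x = \<infinity>"
  using assms unfolding Gamma0_def effdom_def
  by (cases "\<phi> x"; cases "\<psi> x"; auto)+

lemma subdiff_sum_in_argmin_tilted_sum:
  fixes \<phi> \<psi> :: "'a::real_inner \<Rightarrow> ereal"
  assumes \<phi>: "Gamma0 \<phi>" and \<psi>: "Gamma0 \<psi>" and a: "a \<in> subdiff \<phi> x" and b: "b \<in> subdiff \<psi> x"
  shows "x \<in> argmin (\<lambda>x. ereal (- inner x (a + b)) + \<phi> x + \<psi> x)"
  unfolding argmin_def
proof (intro CollectI allI)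
  fix y
  have x: "x \<in> effdom \<phi>" "x \<in> effdom \<psi>" using a b by (auto intro: subdiff_in_effdom)
  show "ereal (- inner x (a + b)) + \<phi> x + \<psi> x \<le> ereal (- inner y (a + b)) + \<phi> y + \<psi> y"
  proof (cases "y \<in> effdom \<phi> \<and> y \<in> effdom \<psi>")
    case True
    then have "real_of_ereal (\<phi> x) + inner a (y - x) \<le> real_of_ereal (\<phi> y)"
      and "real_of_ereal (\<psi> x) + inner b (y - x) \<le> real_of_ereal (\<psi> y)"
      using subdiff_real_le[OF \<phi> a] subdiff_real_le[OF \<psi> b] by auto
    moreover have "inner y (a + b) - inner x (a + b) = inner a (y - x) + inner b (y - x)"
      by (simp add: inner_add_right inner_diff_right inner_commute)
    ultimately have "- inner x (a + b) + real_of_ereal (\<phi> x) + real_of_ereal (\<psi> x)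
        \<le> - inner y (a + b) + real_of_ereal (\<phi> y) + real_of_ereal (\<psi> y)" by linarith
    with True x show ?thesis by (simp add: Gamma0_tilted_sum_eq(1)[OF \<phi> \<psi>])
  next
    case False
    then have "ereal (- inner y (a + b)) + \<phi> y + \<psi> y = \<infinity>"
      by (intro Gamma0_tilted_sum_eq(2)[OF \<phi> \<psi>]) auto
    then show ?thesis by (simp only: ereal_less_eq(1))
  qed
qed

lemma subdiff_of_tight_subgradient_ineq:
  assumes \<phi>: "Gamma0 \<phi>" and a: "a \<in> subdiff \<phi> x0" and x: "x \<in> effdom \<phi>"
    and tight: "real_of_ereal (\<phi> x) \<le> real_of_ereal (\<phi> x0) + inner a (x - x0)"
  shows "a \<in> subdiff \<phi> x"
proof (rule subdiff_realI[OF \<phi> x])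
  fix y assume "y \<in> effdom \<phi>"
  from subdiff_real_le[OF \<phi> a this] tight
  show "real_of_ereal (\<phi> x) + inner a (y - x) \<le> real_of_ereal (\<phi> y)"
    by (simp add: inner_diff_right)
qed

lemma argmin_tilted_sum_subdiff:
  fixes \<phi> \<psi> :: "'a::real_inner \<Rightarrow> ereal"
  assumes \<phi>: "Gamma0 \<phi>" and \<psi>: "Gamma0 \<psi>" and a0: "a0 \<in> subdiff \<phi> x0" and b0: "b0 \<in> subdiff \<psi> x0"
    and x: "x \<in> argmin (\<lambda>x. ereal (- inner x (a0 + b0)) + \<phi> x + \<psi> x)"
  shows "a0 \<in> subdiff \<phi> x" and "b0 \<in> subdiff \<psi> x"
proof -
  let ?c = "a0 + b0"
  define P where "P x = real_of_ereal (\<phi> x)" for x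
  define Q where "Q x = real_of_ereal (\<psi> x)" for x
  note h_fin = Gamma0_tilted_sum_eq(1)[OF \<phi> \<psi>, folded P_def Q_def]
  have x0: "x0 \<in> effdom \<phi>" "x0 \<in> effdom \<psi>" using a0 b0 by (auto intro: subdiff_in_effdom)
  have le: "ereal (- inner x ?c) + \<phi> x + \<psi> x \<le> ereal (- inner x0 ?c) + \<phi> x0 + \<psi> x0"
    using x unfolding argmin_def by blast
  then have x: "x \<in> effdom \<phi>" "x \<in> effdom \<psi>"
    using h_fin[OF x0] Gamma0_tilted_sum_eq(2)[OF \<phi> \<psi>, of x] by fastforce+
  \<comment> \<open>Minimality forces equality in both subgradient inequalities at \<open>x0\<close>.\<close>
  have "- inner x ?c + P x + Q x \<le> - inner x0 ?c + P x0 + Q x0"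
    using le h_fin[OF x] h_fin[OF x0] by simp
  moreover have "P x0 + inner a0 (x - x0) \<le> P x" "Q x0 + inner b0 (x - x0) \<le> Q x"
    using subdiff_real_le[OF \<phi> a0 x(1)] subdiff_real_le[OF \<psi> b0 x(2)] unfolding P_def Q_def by auto
  ultimately have P: "P x \<le> P x0 + inner a0 (x - x0)" and Q: "Q x \<le> Q x0 + inner b0 (x - x0)"
    by (simp_all add: inner_diff_right inner_add_left inner_commute algebra_simps)
  from P show "a0 \<in> subdiff \<phi> x"
    unfolding P_def by (rule subdiff_of_tight_subgradient_ineq[OF \<phi> a0 x(1)])
  from Q show "b0 \<in> subdiff \<psi> x"
    unfolding Q_def by (rule subdiff_of_tight_subgradient_ineq[OF \<psi> b0 x(2)])
qed

lemma argmin_tilted_sum: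
  fixes \<phi> \<psi> :: "'a::real_inner \<Rightarrow> ereal"
  assumes \<phi>: "Gamma0 \<phi>" and \<psi>: "Gamma0 \<psi>" and a0: "a0 \<in> subdiff \<phi> x0" and b0: "b0 \<in> subdiff \<psi> x0"
  shows "argmin (\<lambda>x. ereal (- inner x (a0 + b0)) + \<phi> x + \<psi> x)
       = {x. \<exists>a b. a \<in> subdiff \<phi> x \<and> b \<in> subdiff \<psi> x \<and> a + b = a0 + b0}"
proof (intro set_eqI iffI)
  fix x assume "x \<in> argmin (\<lambda>x. ereal (- inner x (a0 + b0)) + \<phi> x + \<psi> x)"
  with argmin_tilted_sum_subdiff[OF assms] show "x \<in> {x. \<exists>a b. a \<in> subdiff \<phi> x \<and> b \<in> subdiff \<psi> x \<and> a + b = a0 + b0}"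
    by blast
next
  fix x assume "x \<in> {x. \<exists>a b. a \<in> subdiff \<phi> x \<and> b \<in> subdiff \<psi> x \<and> a + b = a0 + b0}"
  then obtain a b where a: "a \<in> subdiff \<phi> x" and b: "b \<in> subdiff \<psi> x" and "a + b = a0 + b0"
    by blast
  from subdiff_sum_in_argmin_tilted_sum[OF \<phi> \<psi> a b] \<open>a + b = a0 + b0\<close>
  show "x \<in> argmin (\<lambda>x. ereal (- inner x (a0 + b0)) + \<phi> x + \<psi> x)" by simp
qed

lemma argmin_eq_sum_subdiff_solutions:
  fixes f g :: "'a::real_inner \<Rightarrow> ereal"
  assumes f: "Gamma0 f" and g: "Gamma0 g" and "sum_subdiff_solutions f g v c \<noteq> {}"
  shows "argmin (\<lambda>x. ereal (- inner x c) + f x + g (x - v)) = sum_subdiff_solutions f g v c"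
proof -
  from assms(3) obtain x0 a0 b0 where a0: "a0 \<in> subdiff f x0" and b0: "b0 \<in> subdiff g (x0 - v)"
    and c: "c = a0 + b0" unfolding sum_subdiff_solutions_def by blast
  from b0 have "b0 \<in> subdiff (\<lambda>x. g (x - v)) x0" by (simp only: subdiff_shift)
  from argmin_tilted_sum[OF f Gamma0_shift[OF g] a0 this] show ?thesis
    unfolding c sum_subdiff_solutions_def subdiff_shift .
qed

theorem proposition6p2:
  fixes f g :: "'a::{real_inner, complete_space} \<Rightarrow> ereal"
    and T :: "'a \<Rightarrow> 'a" and v :: 'a and D R Z :: "'a set"
  assumes "Gamma0 f" and "Gamma0 g"
    and "T = (\<lambda>x. x - prox f x + prox g (refl_prox f x))"
    and "v = proj (closure (range (\<lambda>x. x - T x))) 0"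
    and "D = {a - b | a b. a \<in> dom_subdiff f \<and> b \<in> dom_subdiff g}"
    and "R = {a + b | a b. a \<in> ran_subdiff f \<and> b \<in> ran_subdiff g}"
    and "closure (range (\<lambda>x. x - T x)) = closure (D \<inter> R)"
    and "closure (D \<inter> R) = closure D \<inter> closure R"
    and "proj (closure R) 0 = 0"
    and "Z = {x. \<exists>a b. a \<in> subdiff f x \<and> b \<in> subdiff g (x - v) \<and> 0 = - v + a + b}"
  shows "Z = {x. \<exists>a b. a \<in> subdiff f x \<and> b \<in> subdiff g (x - v) \<and> 0 = a + b}
         \<and> (Z \<noteq> {} \<longrightarrow>
           Z = argmin (\<lambda>x. ereal (- inner x v) + f x + g (x - v))
         \<and> Z = argmin (\<lambda>x. f x + g (x - v)))"
proof -
  have v: "v = proj (closure D \<inter> closure R) 0" using assms(4,7,8) by simp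
  have "closure (range (\<lambda>x. x - T x)) \<noteq> {}" by simp
  with assms(7,8) have "R \<noteq> {}" by auto
  have normal: "\<And>y z. y \<in> effdom f \<Longrightarrow> z \<in> effdom g \<Longrightarrow> 0 \<le> inner (y - z - v) v"
    by (rule proj_closure_inter_normal[OF assms(1,2,5,6) \<open>R \<noteq> {}\<close> assms(9) v])
  have "(0 = - v + a + b) = (a + b = v)" "(0 = a + b) = (a + b = 0)" for a b :: 'a
    by (auto simp: algebra_simps)
  then have Z: "Z = sum_subdiff_solutions f g v v"
    and Z0: "{x. \<exists>a b. a \<in> subdiff f x \<and> b \<in> subdiff g (x - v) \<and> 0 = a + b} = sum_subdiff_solutions f g v 0"
    unfolding assms(10) sum_subdiff_solutions_def by simp_all
  have part_i: "Z = sum_subdiff_solutions f g v 0"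
    using sum_subdiff_solutions_shift[where f = f and g = g and v = v and c = v, OF normal] Z by simp
  have "Z = argmin (\<lambda>x. ereal (- inner x v) + f x + g (x - v))" if "Z \<noteq> {}"
    using argmin_eq_sum_subdiff_solutions[OF assms(1,2)] that Z by simp
  moreover have "Z = argmin (\<lambda>x. f x + g (x - v))" if "Z \<noteq> {}"
    using argmin_eq_sum_subdiff_solutions[OF assms(1,2), of v 0] that part_i
    by (simp add: zero_ereal_def[symmetric])
  ultimately show ?thesis using part_i Z0 by simp
qed

end
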